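(* Let $\mathcal{G}^1$ and $\mathcal{G}^2$ be any two edge-featured graphs (as described in the context). The E-WL-EA algorithm distinguishes $\mathcal{G}^1$ and $\mathcal{G}^2$ if and only if the E-WL algorithm distinguishes them; that is, the discriminative power of E-WL-EA is the same as that of E-WL.
   Context: An edge-featured graph is $\mathcal{G}=(\mathcal{V},\mathcal{E},\mathcal{X}_V,\mathcal{X}_E)$: a finite undirected graph with no self-loops and no isolated nodes, where each node $n_i\in\mathcal{V}$ carries a discrete feature $x^n_i$ and each edge $e_{i,j}\in\mathcal{E}$ (joining $n_i$ and $n_j$) carries a discrete feature $x^e_{i,j}=x^e_{j,i}$. Write $\mathcal{N}_{(i)}$ for the set of neighbours of $n_i$, and $\{\{\cdot\}\}$ for a multiset. Both algorithms below are run on the two graphs simultaneously with the same injective function $HASH$ (equal inputs give equal outputs and distinct inputs give distinct outputs, across both graphs). E-WL (Edged Weisfeiler–Lehman): $c^{(0)}_i=x^n_i$ and $c^{(l)}_i=HASH\big(c^{(l-1)}_i,\{\{(c^{(l-1)}_j,x^e_{i,j}) : n_j\in\mathcal{N}_{(i)}\}\}\big)$. E-WL-EA (Edged Weisfeiler–Lehman with edge aggregation): $c^{(0)}_i=x^n_i$, $d^{(0)}_{i,j}=x^e_{i,j}$, and for $l\ge1$: $c^{(l)}_i=HASH\big(c^{(l-1)}_i,\{\{(c^{(l-1)}_j,d^{(l-1)}_{i,j}) : n_j\in\mathcal{N}_{(i)}\}\}\big)$, then for every edge $d^{(l)}_{i,j}=HASH\big(d^{(l-1)}_{i,j},c^{(l)}_i,c^{(l)}_j\big)$.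 For either algorithm, iteration continues until the node colours stabilize; the output for a graph is the multiset of node colours $\{\{c^{(l)}_i : n_i\in\mathcal{V}\}\}$. The algorithm distinguishes two graphs (declares them non-isomorphic) if these multisets of node colours differ for the two graphs (at some iteration $l$). *)

theory Defs
  imports Main "HOL-Library.Multiset"
begin

definition edge_featured_graph ::
  "'v set \<Rightarrow> ('v \<Rightarrow> 'v \<Rightarrow> bool) \<Rightarrow> ('v \<Rightarrow> 'c) \<Rightarrow> ('v \<Rightarrow> 'v \<Rightarrow> 'c) \<Rightarrow> bool" where
  "edge_featured_graph V E xn xe \<longleftrightarrow>
     finite V \<and>
     (\<forall>u v. E u v \<longrightarrow> u \<in> V \<and> v \<in> V) \<and>
     (\<forall>u v. E u v \<longrightarrow> E v u) \<and>
     (\<forall>u. \<not> E u u) \<and>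
     (\<forall>u \<in> V. \<exists>v. E u v) \<and>
     (\<forall>u v. E u v \<longrightarrow> xe u v = xe v u)"

definition nbrs :: "('v \<Rightarrow> 'v \<Rightarrow> bool) \<Rightarrow> 'v \<Rightarrow> 'v set" where
  "nbrs E i = {j. E i j}"

fun ewl :: "('c \<times> ('c \<times> 'c) multiset \<Rightarrow> 'c) \<Rightarrow> ('v \<Rightarrow> 'v \<Rightarrow> bool) \<Rightarrow> ('v \<Rightarrow> 'c) \<Rightarrow>
            ('v \<Rightarrow> 'v \<Rightarrow> 'c) \<Rightarrow> nat \<Rightarrow> 'v \<Rightarrow> 'c" where
  "ewl hash E xn xe 0 i = xn i"
| "ewl hash E xn xe (Suc l) i =
     hash (ewl hash E xn xe l i,
           image_mset (\<lambda>j. (ewl hash E xn xe l j, xe i j)) (mset_set (nbrs E i)))"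

fun ewl_ea :: "('c \<times> ('c \<times> 'c) multiset \<Rightarrow> 'c) \<Rightarrow> ('c \<times> 'c \<times> 'c \<Rightarrow> 'c) \<Rightarrow>
               ('v \<Rightarrow> 'v \<Rightarrow> bool) \<Rightarrow> ('v \<Rightarrow> 'c) \<Rightarrow> ('v \<Rightarrow> 'v \<Rightarrow> 'c) \<Rightarrow> nat \<Rightarrow>
               ('v \<Rightarrow> 'c) \<times> ('v \<Rightarrow> 'v \<Rightarrow> 'c)" where
  "ewl_ea hashN hashE E xn xe 0 = (xn, xe)"
| "ewl_ea hashN hashE E xn xe (Suc l) =
     (let c = fst (ewl_ea hashN hashE E xn xe l);
          d = snd (ewl_ea hashN hashE E xn xe l);
          c' = (\<lambda>i. hashN (c i, image_mset (\<lambda>j. (c j, d i j)) (mset_set (nbrs E i))));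
          d' = (\<lambda>i j. hashE (d i j, c' i, c' j))
      in (c', d'))"

definition ewl_colours where
  "ewl_colours hash V E xn xe l = image_mset (ewl hash E xn xe l) (mset_set V)"

definition ewl_ea_colours where
  "ewl_ea_colours hashN hashE V E xn xe l =
     image_mset (fst (ewl_ea hashN hashE E xn xe l)) (mset_set V)"

definition ewl_distinguishes ::
  "('c \<times> ('c \<times> 'c) multiset \<Rightarrow> 'c) \<Rightarrow>
   'v set \<Rightarrow> ('v \<Rightarrow> 'v \<Rightarrow> bool) \<Rightarrow> ('v \<Rightarrow> 'c) \<Rightarrow> ('v \<Rightarrow> 'v \<Rightarrow> 'c) \<Rightarrow>
   'w set \<Rightarrow> ('w \<Rightarrow> 'w \<Rightarrow> bool) \<Rightarrow> ('w \<Rightarrow> 'c) \<Rightarrow> ('w \<Rightarrow> 'w \<Rightarrow> 'c) \<Rightarrow> bool" where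
  "ewl_distinguishes hash V1 E1 xn1 xe1 V2 E2 xn2 xe2 \<longleftrightarrow>
     (\<exists>l. ewl_colours hash V1 E1 xn1 xe1 l \<noteq> ewl_colours hash V2 E2 xn2 xe2 l)"

definition ewl_ea_distinguishes ::
  "('c \<times> ('c \<times> 'c) multiset \<Rightarrow> 'c) \<Rightarrow> ('c \<times> 'c \<times> 'c \<Rightarrow> 'c) \<Rightarrow>
   'v set \<Rightarrow> ('v \<Rightarrow> 'v \<Rightarrow> bool) \<Rightarrow> ('v \<Rightarrow> 'c) \<Rightarrow> ('v \<Rightarrow> 'v \<Rightarrow> 'c) \<Rightarrow>
   'w set \<Rightarrow> ('w \<Rightarrow> 'w \<Rightarrow> bool) \<Rightarrow> ('w \<Rightarrow> 'c) \<Rightarrow> ('w \<Rightarrow> 'w \<Rightarrow> 'c) \<Rightarrow> bool" where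
  "ewl_ea_distinguishes hashN hashE V1 E1 xn1 xe1 V2 E2 xn2 xe2 \<longleftrightarrow>
     (\<exists>l. ewl_ea_colours hashN hashE V1 E1 xn1 xe1 l \<noteq> ewl_ea_colours hashN hashE V2 E2 xn2 xe2 l)"

end

theory Submission
  imports Defs
begin

text \<open>Since the hash functions are injective, each has a left inverse, so a colour can be
  unpacked into the data it was hashed from. Unpacking recursively yields, at every iteration l,
  maps that do not depend on the graph and translate E-WL colours into E-WL-EA node colours and
  back. Hence, at each iteration, the two colour multisets of the two graphs agree for one
  algorithm exactly when they agree for the other.\<close>

fun ea_colour_of_ewl ::
    "('c \<times> ('c \<times> 'c) multiset \<Rightarrow> 'c) \<Rightarrow> ('c \<times> 'c \<times> 'c \<Rightarrow> 'c) \<Rightarrow> nat \<Rightarrow> 'c \<Rightarrow> 'c"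
and ea_edge_colour_of_ewl ::
    "('c \<times> ('c \<times> 'c) multiset \<Rightarrow> 'c) \<Rightarrow> ('c \<times> 'c \<times> 'c \<Rightarrow> 'c) \<Rightarrow> nat \<Rightarrow> 'c \<Rightarrow> 'c \<Rightarrow> 'c \<Rightarrow> 'c"
where
  "ea_colour_of_ewl hN hE 0 c = c"
| "ea_colour_of_ewl hN hE (Suc l) c =
     hN (ea_colour_of_ewl hN hE l (fst (inv hN c)),
         image_mset (\<lambda>(c', x). (ea_colour_of_ewl hN hE l c',
                                ea_edge_colour_of_ewl hN hE l x (fst (inv hN c)) c'))
           (snd (inv hN c)))"
| "ea_edge_colour_of_ewl hN hE 0 x a b = x"
| "ea_edge_colour_of_ewl hN hE (Suc l) x a b =
     hE (ea_edge_colour_of_ewl hN hE l x (fst (inv hN a)) (fst (inv hN b)),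
         ea_colour_of_ewl hN hE (Suc l) a, ea_colour_of_ewl hN hE (Suc l) b)"

lemma ewl_ea_via_ewl:
  assumes "inj hN"
  shows "fst (ewl_ea hN hE E xn xe l) = ea_colour_of_ewl hN hE l \<circ> ewl hN E xn xe l \<and>
         snd (ewl_ea hN hE E xn xe l) =
           (\<lambda>i j. ea_edge_colour_of_ewl hN hE l (xe i j) (ewl hN E xn xe l i) (ewl hN E xn xe l j))"
proof (induction l)
  case 0
  show ?case by simp
next
  case (Suc l)
  have node: "fst (ewl_ea hN hE E xn xe (Suc l)) = ea_colour_of_ewl hN hE (Suc l) \<circ> ewl hN E xn xe (Suc l)"
    using Suc.IH by (simp add: fun_eq_iff Let_def inv_f_f[OF assms] multiset.map_comp o_def)
  moreover have "snd (ewl_ea hN hE E xn xe (Suc l)) =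
      (\<lambda>i j. ea_edge_colour_of_ewl hN hE (Suc l) (xe i j)
               (ewl hN E xn xe (Suc l) i) (ewl hN E xn xe (Suc l) j))"
    using Suc.IH node by (simp add: fun_eq_iff Let_def inv_f_f[OF assms])
  ultimately show ?case ..
qed

primrec edge_feature_of_ea :: "('c \<times> 'c \<times> 'c \<Rightarrow> 'c) \<Rightarrow> nat \<Rightarrow> 'c \<Rightarrow> 'c" where
  "edge_feature_of_ea hE 0 d = d"
| "edge_feature_of_ea hE (Suc l) d = edge_feature_of_ea hE l (fst (inv hE d))"

lemma edge_feature_of_ea_ewl_ea:
  assumes "inj hE"
  shows "edge_feature_of_ea hE l (snd (ewl_ea hN hE E xn xe l) i j) = xe i j"
  by (induction l) (simp_all add: Let_def inv_f_f[OF assms])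

fun ewl_colour_of_ea ::
    "('c \<times> ('c \<times> 'c) multiset \<Rightarrow> 'c) \<Rightarrow> ('c \<times> 'c \<times> 'c \<Rightarrow> 'c) \<Rightarrow> nat \<Rightarrow> 'c \<Rightarrow> 'c" where
  "ewl_colour_of_ea hN hE 0 c = c"
| "ewl_colour_of_ea hN hE (Suc l) c =
     hN (ewl_colour_of_ea hN hE l (fst (inv hN c)),
         image_mset (\<lambda>(c', d). (ewl_colour_of_ea hN hE l c', edge_feature_of_ea hE l d))
           (snd (inv hN c)))"

lemma ewl_via_ewl_ea:
  assumes "inj hN" "inj hE"
  shows "ewl hN E xn xe l = ewl_colour_of_ea hN hE l \<circ> fst (ewl_ea hN hE E xn xe l)"
proof (induction l)
  case 0
  show ?case by simp
next
  case (Suc l)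
  then show ?case
    by (simp add: fun_eq_iff Let_def inv_f_f[OF assms(1)] multiset.map_comp o_def
        edge_feature_of_ea_ewl_ea[OF assms(2)])
qed

lemma image_mset_eq_iff_interdefinable:
  assumes "f1 = F \<circ> g1" "f2 = F \<circ> g2" "g1 = G \<circ> f1" "g2 = G \<circ> f2"
  shows "image_mset f1 A = image_mset f2 B \<longleftrightarrow> image_mset g1 A = image_mset g2 B"
  by (metis assms multiset.map_comp)

theorem theorem2:
  fixes V1 :: "'v set" and E1 :: "'v \<Rightarrow> 'v \<Rightarrow> bool" and xn1 :: "'v \<Rightarrow> 'c" and xe1 :: "'v \<Rightarrow> 'v \<Rightarrow> 'c"
    and V2 :: "'w set" and E2 :: "'w \<Rightarrow> 'w \<Rightarrow> bool" and xn2 :: "'w \<Rightarrow> 'c" and xe2 :: "'w \<Rightarrow> 'w \<Rightarrow> 'c"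
    and hashN :: "'c \<times> ('c \<times> 'c) multiset \<Rightarrow> 'c" and hashE :: "'c \<times> 'c \<times> 'c \<Rightarrow> 'c"
  assumes "edge_featured_graph V1 E1 xn1 xe1"
    and "edge_featured_graph V2 E2 xn2 xe2"
    and "inj hashN" and "inj hashE"
  shows "ewl_ea_distinguishes hashN hashE V1 E1 xn1 xe1 V2 E2 xn2 xe2 \<longleftrightarrow>
         ewl_distinguishes hashN V1 E1 xn1 xe1 V2 E2 xn2 xe2"
proof -
  note to_ea = ewl_ea_via_ewl[OF assms(3), THEN conjunct1]
  note to_ewl = ewl_via_ewl_ea[OF assms(3,4)]
  have "ewl_ea_colours hashN hashE V1 E1 xn1 xe1 l = ewl_ea_colours hashN hashE V2 E2 xn2 xe2 l
        \<longleftrightarrow> ewl_colours hashN V1 E1 xn1 xe1 l = ewl_colours hashN V2 E2 xn2 xe2 l" for l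
    unfolding ewl_ea_colours_def ewl_colours_def
    by (rule image_mset_eq_iff_interdefinable[OF to_ea to_ea to_ewl to_ewl])
  then show ?thesis
    unfolding ewl_ea_distinguishes_def ewl_distinguishes_def by blast
qed

end
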